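(* In the Hex plane, the p-area of every parallelogram equals base $\times$ height, where the base is the Hex-norm length of one side and the height is the Hex distance between the line containing that side and the line containing the opposite side.
   Context: Let $u_0=(1,0)$, $u_1=(-1/2,\sqrt3/2)$, $u_2=-u_0-u_1$, and let $H$ be the convex hull of $\{\pm u_0,\pm u_1,\pm u_2\}$. The Hex plane is $\mathbb R^2$ with the norm whose unit ball is $H$ and the induced metric. The p-area of a 2-dimensional normed space is $K^{-1}\lambda$ where $\lambda$ is Lebesgue measure from an inner product and $K$ is the supremum of $\lambda$-areas of parallelograms spanned by two vectors of norm $\le1$. *)

theory Defs
  imports "HOL-Analysis.Analysis"
begin

definition hex_u0 :: "real^2" where "hex_u0 = vector [1, 0]"
definition hex_u1 :: "real^2" where "hex_u1 = vector [-1/2, sqrt 3 / 2]"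
definition hex_u2 :: "real^2" where "hex_u2 = - hex_u0 - hex_u1"

definition hexH :: "(real^2) set" where
  "hexH = convex hull {hex_u0, - hex_u0, hex_u1, - hex_u1, hex_u2, - hex_u2}"

definition hex_norm :: "real^2 \<Rightarrow> real" where
  "hex_norm x = Inf {t. 0 < t \<and> x \<in> (\<lambda>y. t *\<^sub>R y) ` hexH}"

definition hex_dist :: "real^2 \<Rightarrow> real^2 \<Rightarrow> real" where
  "hex_dist x y = hex_norm (x - y)"

definition hex_setdist :: "(real^2) set \<Rightarrow> (real^2) set \<Rightarrow> real" where
  "hex_setdist A B = Inf {hex_dist x y | x y. x \<in> A \<and> y \<in> B}"

definition parallelogram :: "real^2 \<Rightarrow> real^2 \<Rightarrow> real^2 \<Rightarrow> (real^2) set" where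
  "parallelogram p a b = {p + s *\<^sub>R a + t *\<^sub>R b | s t. s \<in> {0..1} \<and> t \<in> {0..1}}"

definition line_through :: "real^2 \<Rightarrow> real^2 \<Rightarrow> (real^2) set" where
  "line_through p a = {p + s *\<^sub>R a | s. True}"

definition hex_K :: real where
  "hex_K = Sup {measure lebesgue (parallelogram 0 u v) | u v. hex_norm u \<le> 1 \<and> hex_norm v \<le> 1}"

text \<open>p-area (Holmes--Thompson type normalisation K^{-1} lambda).\<close>
definition p_area :: "(real^2) set \<Rightarrow> real" where
  "p_area S = measure lebesgue S / hex_K"

end

theory Submission
  imports Defs
begin

text \<open>In the coordinates \<open>(\<alpha>, \<beta>)\<close> with respect to the basis \<open>u\<^sub>0, u\<^sub>1\<close> the Hex norm is
  \<open>max |\<alpha>| |\<beta>| |\<alpha> - \<beta>|\<close> and the determinant is \<open>\<surd>3/2 (\<alpha>\<beta>' - \<beta>\<alpha>')\<close>. Cutting the plane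
  into the six cones spanned by adjacent vertices of the hexagon gives
  \<open>|det(x, y)| \<le> \<surd>3/2 \<parallel>x\<parallel> \<parallel>y\<parallel>\<close>, with equality for every \<open>x\<close> and a suitable vertex \<open>y\<close>.
  Hence \<open>K = \<surd>3/2\<close>, and the distance between the lines \<open>p + \<real>a\<close> and \<open>p + b + \<real>a\<close>, the least
  norm of a vector \<open>c\<close> with \<open>det(a, c) = det(a, b)\<close>, is \<open>|det(a, b)| / (\<surd>3/2 \<parallel>a\<parallel>)\<close>. Both
  sides of the claim are therefore \<open>|det(a, b)| / (\<surd>3/2)\<close>.\<close>

definition cross2 :: "real^2 \<Rightarrow> real^2 \<Rightarrow> real" where
  "cross2 x y = x$1 * y$2 - x$2 * y$1"

lemma cross2_simps:
  "cross2 (x + y) z = cross2 x z + cross2 y z"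
  "cross2 (t *\<^sub>R x) z = t * cross2 x z"
  "cross2 a (x + y) = cross2 a x + cross2 a y"
  "cross2 a (x - y) = cross2 a x - cross2 a y"
  "cross2 a (- x) = - cross2 a x"
  "cross2 a (t *\<^sub>R x) = t * cross2 a x"
  "cross2 a a = 0"
  by (simp_all add: cross2_def algebra_simps)

lemma cross2_eq_0_imp_multiple:
  assumes "a \<noteq> 0" and "cross2 a z = 0"
  obtains s where "z = s *\<^sub>R a"
proof (cases "a$1 = 0")
  case False
  with assms(2) have "z = (z$1 / a$1) *\<^sub>R a"
    by (simp add: cross2_def vec_eq_iff forall_2 field_simps)
  then show ?thesis by (rule that)
next
  case True
  with assms(1) have "a$2 \<noteq> 0" by (auto simp: vec_eq_iff forall_2)
  with True assms(2) have "z = (z$2 / a$2) *\<^sub>R a"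
    by (simp add: cross2_def vec_eq_iff forall_2 field_simps)
  then show ?thesis by (rule that)
qed

lemma measure_parallelogram: "measure lebesgue (parallelogram p a b) = \<bar>cross2 a b\<bar>"
proof -
  define f :: "real^2 \<Rightarrow> real^2" where "f x = x$1 *\<^sub>R a + x$2 *\<^sub>R b" for x
  have "linear f" unfolding f_def linear_iff by (auto simp: algebra_simps)
  have unit_square: "cbox (0::real^2) 1 = {x. 0 \<le> x$1 \<and> x$1 \<le> 1 \<and> 0 \<le> x$2 \<and> x$2 \<le> 1}"
    by (auto simp: mem_box_cart forall_2)
  have "cbox (0::real^2) 1 \<noteq> {}"
    by (auto simp: box_ne_empty Basis_vec_def inner_axis cart_eq_inner_axis[symmetric])
  then have "measure lebesgue (cbox (0::real^2) 1) = 1"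
    by (simp add: content_cbox_cart)
  moreover have "parallelogram p a b = (+) p ` f ` cbox 0 1"
  proof -
    have "parallelogram p a b = (\<lambda>x. p + f x) ` cbox 0 1"
    proof (intro set_eqI iffI)
      fix z assume "z \<in> parallelogram p a b"
      then obtain s t where "z = p + s *\<^sub>R a + t *\<^sub>R b" "s \<in> {0..1}" "t \<in> {0..1}"
        unfolding parallelogram_def by blast
      then show "z \<in> (\<lambda>x. p + f x) ` cbox 0 1"
        by (intro image_eqI[of _ _ "vector [s, t]"]) (simp_all add: unit_square f_def add.assoc)
    next
      fix z assume "z \<in> (\<lambda>x. p + f x) ` cbox 0 1"
      then show "z \<in> parallelogram p a b"
        unfolding parallelogram_def unit_square f_def by (force simp: add.assoc)
    qed
    then show ?thesis by (simp add: image_image)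
  qed
  moreover have "det (matrix f) = cross2 a b"
    by (simp add: det_2 matrix_def f_def cross2_def axis_def)
  ultimately show ?thesis
    using measure_linear_image[OF \<open>linear f\<close>, of "cbox 0 1"] by (simp add: measure_translation)
qed

definition hex_max :: "real \<Rightarrow> real \<Rightarrow> real" where
  "hex_max \<alpha> \<beta> = max (max \<bar>\<alpha>\<bar> \<bar>\<beta>\<bar>) \<bar>\<alpha> - \<beta>\<bar>"

lemma hex_max_ge: "\<bar>\<alpha>\<bar> \<le> hex_max \<alpha> \<beta>" "\<bar>\<beta>\<bar> \<le> hex_max \<alpha> \<beta>" "\<bar>\<alpha> - \<beta>\<bar> \<le> hex_max \<alpha> \<beta>"
  by (simp_all add: hex_max_def)
lemma hex_max_add_le: "hex_max (\<alpha> + \<alpha>') (\<beta> + \<beta>') \<le> hex_max \<alpha> \<beta> + hex_max \<alpha>' \<beta>'"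
proof -
  have "\<bar>(\<alpha> + \<alpha>') - (\<beta> + \<beta>')\<bar> \<le> \<bar>\<alpha> - \<beta>\<bar> + \<bar>\<alpha>' - \<beta>'\<bar>"
    by (metis abs_triangle_ineq add_diff_add)
  with abs_triangle_ineq[of \<alpha> \<alpha>'] abs_triangle_ineq[of \<beta> \<beta>']
    hex_max_ge[where \<alpha>=\<alpha> and \<beta>=\<beta>] hex_max_ge[where \<alpha>=\<alpha>' and \<beta>=\<beta>'] show ?thesis
    unfolding hex_max_def[of "\<alpha> + \<alpha>'"] by simp
qed

lemma hex_max_scale: "hex_max (t * \<alpha>) (t * \<beta>) = \<bar>t\<bar> * hex_max \<alpha> \<beta>"
  by (simp add: hex_max_def abs_mult max_mult_distrib_left flip: right_diff_distrib)

definition hex_coord0 :: "real^2 \<Rightarrow> real" where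
  "hex_coord0 x = x$1 + x$2 / sqrt 3"

definition hex_coord1 :: "real^2 \<Rightarrow> real" where
  "hex_coord1 x = 2 * x$2 / sqrt 3"

lemma hex_coords_decomp: "x = hex_coord0 x *\<^sub>R hex_u0 + hex_coord1 x *\<^sub>R hex_u1"
  by (simp add: vec_eq_iff forall_2 hex_coord0_def hex_coord1_def hex_u0_def hex_u1_def field_simps)

lemma hex_coords_linear:
  "hex_coord0 (x + y) = hex_coord0 x + hex_coord0 y"
  "hex_coord1 (x + y) = hex_coord1 x + hex_coord1 y"
  "hex_coord0 (t *\<^sub>R x) = t * hex_coord0 x"
  "hex_coord1 (t *\<^sub>R x) = t * hex_coord1 x"
  by (simp_all add: hex_coord0_def hex_coord1_def algebra_simps add_divide_distrib)

lemma hex_coords_uminus: "hex_coord0 (- x) = - hex_coord0 x" "hex_coord1 (- x) = - hex_coord1 x"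
  using hex_coords_linear(3,4)[of "-1" x] by simp_all

lemma hex_coords_vertices:
  "hex_coord0 hex_u0 = 1" "hex_coord1 hex_u0 = 0"
  "hex_coord0 hex_u1 = 0" "hex_coord1 hex_u1 = 1"
  "hex_coord0 hex_u2 = -1" "hex_coord1 hex_u2 = -1"
  by (simp_all add: hex_coord0_def hex_coord1_def hex_u0_def hex_u1_def hex_u2_def field_simps)

lemma cross2_hex_coords:
  "cross2 x y = sqrt 3 / 2 * (hex_coord0 x * hex_coord1 y - hex_coord1 x * hex_coord0 y)"
proof -
  have sqrt3: "sqrt 3 * (sqrt 3 * z) = 3 * z" for z :: real by (simp flip: mult.assoc)
  show ?thesis by (simp add: cross2_def hex_coord0_def hex_coord1_def field_simps sqrt3)
qed

definition hex_gauge :: "real^2 \<Rightarrow> real" where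
  "hex_gauge x = hex_max (hex_coord0 x) (hex_coord1 x)"

lemma hex_gauge_nonneg: "0 \<le> hex_gauge x"
  by (simp add: hex_gauge_def hex_max_def)

lemma hex_gauge_add_le: "hex_gauge (x + y) \<le> hex_gauge x + hex_gauge y"
  by (simp add: hex_gauge_def hex_coords_linear hex_max_add_le)

lemma hex_gauge_scale: "hex_gauge (t *\<^sub>R x) = \<bar>t\<bar> * hex_gauge x"
  by (simp add: hex_gauge_def hex_coords_linear hex_max_scale)

lemma hex_gauge_ge:
  "\<bar>hex_coord0 x\<bar> \<le> hex_gauge x" "\<bar>hex_coord1 x\<bar> \<le> hex_gauge x"
  "\<bar>hex_coord0 x - hex_coord1 x\<bar> \<le> hex_gauge x"
  by (simp_all add: hex_gauge_def hex_max_def)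

definition hex_vertices :: "(real^2) set" where
  "hex_vertices = {hex_u0, - hex_u0, hex_u1, - hex_u1, hex_u2, - hex_u2}"

lemma hex_gauge_vertex: "P \<in> hex_vertices \<Longrightarrow> hex_gauge P = 1"
  by (auto simp: hex_vertices_def hex_gauge_def hex_max_def hex_coords_vertices hex_coords_uminus)

lemma hex_sector_decomp:
  obtains P Q s t where "P \<in> hex_vertices" "Q \<in> hex_vertices" "0 \<le> s" "0 \<le> t"
    "s + t \<le> hex_gauge x" "x = s *\<^sub>R P + t *\<^sub>R Q"
proof -
  obtain \<alpha> \<beta> where x: "x = \<alpha> *\<^sub>R hex_u0 + \<beta> *\<^sub>R hex_u1"
    and g: "\<bar>\<alpha>\<bar> \<le> hex_gauge x" "\<bar>\<beta>\<bar> \<le> hex_gauge x" "\<bar>\<alpha> - \<beta>\<bar> \<le> hex_gauge x"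
    using hex_coords_decomp hex_gauge_ge by blast
  have u2: "hex_u2 = - hex_u0 - hex_u1" by (simp add: hex_u2_def)
  have V: "hex_u0 \<in> hex_vertices" "- hex_u0 \<in> hex_vertices" "hex_u1 \<in> hex_vertices"
    "- hex_u1 \<in> hex_vertices" "hex_u2 \<in> hex_vertices" "- hex_u2 \<in> hex_vertices"
    by (simp_all add: hex_vertices_def)
  consider "0 \<le> \<beta>" "\<beta> \<le> \<alpha>" | "0 \<le> \<alpha>" "\<alpha> \<le> \<beta>" | "\<alpha> \<le> 0" "0 \<le> \<beta>"
    | "\<beta> \<le> \<alpha>" "\<alpha> \<le> 0" | "\<alpha> \<le> \<beta>" "\<beta> \<le> 0" | "\<beta> \<le> 0" "0 \<le> \<alpha>"
    by linarith
  then show ?thesis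
  proof cases
    case 1
    have eq: "x = (\<alpha> - \<beta>) *\<^sub>R hex_u0 + \<beta> *\<^sub>R (- hex_u2)" by (simp add: x u2 algebra_simps)
    show ?thesis by (rule that[OF V(1) V(6) _ _ _ eq]) (use 1 g in linarith)+
  next
    case 2
    have eq: "x = \<alpha> *\<^sub>R (- hex_u2) + (\<beta> - \<alpha>) *\<^sub>R hex_u1" by (simp add: x u2 algebra_simps)
    show ?thesis by (rule that[OF V(6) V(3) _ _ _ eq]) (use 2 g in linarith)+
  next
    case 3
    have eq: "x = (- \<alpha>) *\<^sub>R (- hex_u0) + \<beta> *\<^sub>R hex_u1" by (simp add: x u2 algebra_simps)
    show ?thesis by (rule that[OF V(2) V(3) _ _ _ eq]) (use 3 g in linarith)+
  next
    case 4
    have eq: "x = (- \<alpha>) *\<^sub>R hex_u2 + (\<alpha> - \<beta>) *\<^sub>R (- hex_u1)" by (simp add: x u2 algebra_simps)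
    show ?thesis by (rule that[OF V(5) V(4) _ _ _ eq]) (use 4 g in linarith)+
  next
    case 5
    have eq: "x = (\<beta> - \<alpha>) *\<^sub>R (- hex_u0) + (- \<beta>) *\<^sub>R hex_u2" by (simp add: x u2 algebra_simps)
    show ?thesis by (rule that[OF V(2) V(5) _ _ _ eq]) (use 5 g in linarith)+
  next
    case 6
    have eq: "x = \<alpha> *\<^sub>R hex_u0 + (- \<beta>) *\<^sub>R (- hex_u1)" by (simp add: x u2 algebra_simps)
    show ?thesis by (rule that[OF V(1) V(4) _ _ _ eq]) (use 6 g in linarith)+
  qed
qed

lemma convex_hex_gauge_le_one: "convex {x. hex_gauge x \<le> 1}"
proof (rule convexI)
  fix x y :: "real^2" and u v :: real
  assume "x \<in> {x. hex_gauge x \<le> 1}" "y \<in> {x. hex_gauge x \<le> 1}" "0 \<le> u" "0 \<le> v" "u + v = 1"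
  then have "hex_gauge x \<le> 1" "hex_gauge y \<le> 1" by simp_all
  have "hex_gauge (u *\<^sub>R x + v *\<^sub>R y) \<le> u * hex_gauge x + v * hex_gauge y"
    using hex_gauge_add_le[of "u *\<^sub>R x" "v *\<^sub>R y"] \<open>0 \<le> u\<close> \<open>0 \<le> v\<close> by (simp add: hex_gauge_scale)
  also have "\<dots> \<le> u + v"
    using \<open>hex_gauge x \<le> 1\<close> \<open>hex_gauge y \<le> 1\<close> \<open>0 \<le> u\<close> \<open>0 \<le> v\<close>
    by (intro add_mono) (simp_all add: mult_left_le)
  finally show "u *\<^sub>R x + v *\<^sub>R y \<in> {x. hex_gauge x \<le> 1}" using \<open>u + v = 1\<close> by simp
qed

lemma convex_scaled_add_mem:
  assumes "convex S" "0 \<in> S" "x \<in> S" "y \<in> S" "0 \<le> s" "0 \<le> t" "s + t \<le> 1"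
  shows "s *\<^sub>R x + t *\<^sub>R y \<in> S"
proof (cases "s + t = 0")
  case True
  with assms have "s = 0" "t = 0" by linarith+
  with assms show ?thesis by simp
next
  case False
  with assms have pos: "0 < s + t" by linarith
  define z where "z = (s / (s + t)) *\<^sub>R x + (t / (s + t)) *\<^sub>R y"
  have "s / (s + t) + t / (s + t) = 1" using pos by (simp flip: add_divide_distrib)
  then have "z \<in> S"
    unfolding z_def using assms pos by (intro convexD) simp_all
  then have "(s + t) *\<^sub>R z + (1 - (s + t)) *\<^sub>R 0 \<in> S"
    using assms pos by (intro convexD) simp_all
  with pos show ?thesis by (simp add: z_def scaleR_add_right)
qed

lemma hexH_eq: "hexH = {x. hex_gauge x \<le> 1}"
proof
  have hexH: "hexH = convex hull hex_vertices" by (simp add: hexH_def hex_vertices_def)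
  show "hexH \<subseteq> {x. hex_gauge x \<le> 1}"
    unfolding hexH by (rule hull_minimal) (auto simp: hex_gauge_vertex convex_hex_gauge_le_one)
  show "{x. hex_gauge x \<le> 1} \<subseteq> hexH"
  proof
    fix x :: "real^2" assume "x \<in> {x. hex_gauge x \<le> 1}"
    obtain P Q s t where "P \<in> hex_vertices" "Q \<in> hex_vertices" "0 \<le> s" "0 \<le> t"
      "s + t \<le> hex_gauge x" "x = s *\<^sub>R P + t *\<^sub>R Q"
      by (rule hex_sector_decomp)
    moreover have "0 \<in> hexH"
    proof -
      have "(1/2) *\<^sub>R hex_u0 + (1/2) *\<^sub>R (- hex_u0) \<in> hexH"
        unfolding hexH by (intro convexD) (auto simp: hex_vertices_def hull_inc)
      then show ?thesis by simp
    qed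
    ultimately show "x \<in> hexH"
      using \<open>x \<in> {x. hex_gauge x \<le> 1}\<close>
      by (auto simp: hexH hull_inc intro!: convex_scaled_add_mem)
  qed
qed

lemma hex_norm_eq_gauge: "hex_norm x = hex_gauge x"
proof -
  have "x \<in> (\<lambda>y. t *\<^sub>R y) ` hexH \<longleftrightarrow> hex_gauge x \<le> t" if "0 < t" for t
  proof
    assume "x \<in> (\<lambda>y. t *\<^sub>R y) ` hexH"
    with \<open>0 < t\<close> show "hex_gauge x \<le> t"
      by (auto simp: hexH_eq hex_gauge_scale mult_left_le)
  next
    assume "hex_gauge x \<le> t"
    with \<open>0 < t\<close> have "(1/t) *\<^sub>R x \<in> hexH" and "x = t *\<^sub>R ((1/t) *\<^sub>R x)"
      by (simp_all add: hexH_eq hex_gauge_scale)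
    then show "x \<in> (\<lambda>y. t *\<^sub>R y) ` hexH" by blast
  qed
  then have "{t. 0 < t \<and> x \<in> (\<lambda>y. t *\<^sub>R y) ` hexH} = {0<..} \<inter> {hex_gauge x..}"
    by auto
  also have "Inf \<dots> = hex_gauge x"
  proof (cases "hex_gauge x = 0")
    case True
    then have "{0<..} \<inter> {hex_gauge x..} = {0<..}" by auto
    with True show ?thesis by simp
  next
    case False
    with hex_gauge_nonneg[of x] have "{0<..} \<inter> {hex_gauge x..} = {hex_gauge x..}" by auto
    then show ?thesis by simp
  qed
  finally show ?thesis unfolding hex_norm_def .
qed

lemma hex_norm_nonneg: "0 \<le> hex_norm x"
  by (simp add: hex_norm_eq_gauge hex_gauge_nonneg)

lemma hex_norm_scale: "hex_norm (t *\<^sub>R x) = \<bar>t\<bar> * hex_norm x"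
  by (simp add: hex_norm_eq_gauge hex_gauge_scale)

lemma hex_norm_pos:
  assumes "x \<noteq> 0"
  shows "0 < hex_norm x"
proof -
  have "hex_gauge x \<noteq> 0"
  proof
    assume "hex_gauge x = 0"
    then have "hex_coord0 x = 0" "hex_coord1 x = 0" using hex_gauge_ge[of x] by simp_all
    then have "x = 0" by (subst hex_coords_decomp) simp
    with assms show False ..
  qed
  with hex_gauge_nonneg[of x] show ?thesis by (simp add: hex_norm_eq_gauge)
qed

lemma abs_cross2_vertex_le: "P \<in> hex_vertices \<Longrightarrow> \<bar>cross2 P y\<bar> \<le> sqrt 3 / 2 * hex_gauge y"
  using hex_gauge_ge[of y]
  by (auto simp: hex_vertices_def cross2_hex_coords hex_coords_vertices hex_coords_uminus abs_mult
      abs_minus_commute)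

lemma abs_cross2_le: "\<bar>cross2 x y\<bar> \<le> sqrt 3 / 2 * hex_norm x * hex_norm y"
proof -
  obtain P Q s t where PQ: "P \<in> hex_vertices" "Q \<in> hex_vertices" and "0 \<le> s" "0 \<le> t"
    and st: "s + t \<le> hex_gauge x" and x: "x = s *\<^sub>R P + t *\<^sub>R Q"
    by (rule hex_sector_decomp)
  have "\<bar>cross2 x y\<bar> = \<bar>s * cross2 P y + t * cross2 Q y\<bar>"
    by (simp add: x cross2_simps)
  also have "\<dots> \<le> s * \<bar>cross2 P y\<bar> + t * \<bar>cross2 Q y\<bar>"
    using \<open>0 \<le> s\<close> \<open>0 \<le> t\<close> by (metis abs_mult abs_of_nonneg abs_triangle_ineq)
  also have "\<dots> \<le> s * (sqrt 3 / 2 * hex_gauge y) + t * (sqrt 3 / 2 * hex_gauge y)"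
    using PQ \<open>0 \<le> s\<close> \<open>0 \<le> t\<close> by (intro add_mono mult_left_mono abs_cross2_vertex_le)
  also have "\<dots> = (s + t) * (sqrt 3 / 2 * hex_gauge y)"
    by (simp add: algebra_simps)
  also have "\<dots> \<le> sqrt 3 / 2 * hex_norm x * hex_norm y"
    using st hex_gauge_nonneg[of y] by (simp add: hex_norm_eq_gauge mult_right_mono)
  finally show ?thesis .
qed

lemma exists_unit_abs_cross2_eq: "\<exists>g. hex_norm g = 1 \<and> \<bar>cross2 a g\<bar> = sqrt 3 / 2 * hex_norm a"
proof -
  let ?\<alpha> = "hex_coord0 a" and ?\<beta> = "hex_coord1 a"
  have unit: "hex_norm hex_u0 = 1" "hex_norm hex_u1 = 1" "hex_norm hex_u2 = 1"
    by (simp_all add: hex_norm_eq_gauge hex_gauge_vertex hex_vertices_def)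
  have cross: "cross2 a hex_u0 = - (sqrt 3 / 2 * ?\<beta>)" "cross2 a hex_u1 = sqrt 3 / 2 * ?\<alpha>"
    "cross2 a hex_u2 = sqrt 3 / 2 * (?\<beta> - ?\<alpha>)"
    by (simp_all add: cross2_hex_coords hex_coords_vertices algebra_simps)
  have "hex_norm a = \<bar>?\<alpha>\<bar> \<or> hex_norm a = \<bar>?\<beta>\<bar> \<or> hex_norm a = \<bar>?\<beta> - ?\<alpha>\<bar>"
    by (simp add: hex_norm_eq_gauge hex_gauge_def hex_max_def max_def abs_minus_commute)
  then show ?thesis
  proof (elim disjE)
    assume "hex_norm a = \<bar>?\<alpha>\<bar>"
    then show ?thesis by (intro exI[of _ hex_u1]) (simp add: unit cross abs_mult)
  next
    assume "hex_norm a = \<bar>?\<beta>\<bar>"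
    then show ?thesis by (intro exI[of _ hex_u0]) (simp add: unit cross abs_mult)
  next
    assume "hex_norm a = \<bar>?\<beta> - ?\<alpha>\<bar>"
    then show ?thesis by (intro exI[of _ hex_u2]) (simp add: unit cross abs_mult)
  qed
qed

lemma hex_setdist_parallel_lines:
  assumes "a \<noteq> 0"
  shows "hex_setdist (line_through p a) (line_through (p + b) a)
           = \<bar>cross2 a b\<bar> / (sqrt 3 / 2 * hex_norm a)"
proof -
  let ?d = "\<bar>cross2 a b\<bar> / (sqrt 3 / 2 * hex_norm a)"
  let ?D = "{hex_dist x y |x y. x \<in> line_through p a \<and> y \<in> line_through (p + b) a}"
  have k: "0 < sqrt 3 / 2 * hex_norm a" using hex_norm_pos[OF assms] by simp
  have lower: "?d \<le> z" if "z \<in> ?D" for z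
  proof -
    from \<open>z \<in> ?D\<close> obtain s t where "z = hex_dist (p + s *\<^sub>R a) (p + b + t *\<^sub>R a)"
      unfolding line_through_def by blast
    then have z: "z = hex_norm ((p + s *\<^sub>R a) - (p + b + t *\<^sub>R a))"
      unfolding hex_dist_def .
    have "cross2 a ((p + s *\<^sub>R a) - (p + b + t *\<^sub>R a)) = - cross2 a b"
      by (simp add: cross2_simps algebra_simps)
    then have "\<bar>cross2 a b\<bar> \<le> sqrt 3 / 2 * hex_norm a * z"
      using abs_cross2_le[of a "(p + s *\<^sub>R a) - (p + b + t *\<^sub>R a)"] z by simp
    with k show ?thesis by (simp add: divide_le_eq mult.commute)
  qed
  \<comment> \<open>the bound is attained at the multiple \<open>c\<close> of a direction \<open>g\<close> of equality in \<open>abs_cross2_le\<close>\<close>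
  obtain g where g: "hex_norm g = 1" "\<bar>cross2 a g\<bar> = sqrt 3 / 2 * hex_norm a"
    using exists_unit_abs_cross2_eq by blast
  define c where "c = (cross2 a b / cross2 a g) *\<^sub>R g"
  have "cross2 a g \<noteq> 0" using g k by auto
  then have "cross2 a (c - b) = 0" by (simp add: c_def cross2_simps)
  then obtain s where s: "c - b = s *\<^sub>R a" using cross2_eq_0_imp_multiple[OF assms] by blast
  have "hex_norm c \<in> ?D"
  proof -
    have "b + s *\<^sub>R a = c" using s by (simp add: algebra_simps)
    then have "hex_norm c = hex_dist (p + 0 *\<^sub>R a) (p + b + s *\<^sub>R a)"
      using hex_norm_scale[of "-1" c] by (simp add: hex_dist_def add.assoc)
    then show ?thesis unfolding line_through_def by blast
  qed
  moreover have "hex_norm c = \<bar>cross2 a b\<bar> / \<bar>cross2 a g\<bar>"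
    using g(1) by (simp add: c_def hex_norm_scale abs_divide)
  then have "hex_norm c = ?d" by (simp only: g(2))
  ultimately have "Inf ?D = ?d" using lower by (intro cInf_eq_minimum) auto
  then show ?thesis unfolding hex_setdist_def .
qed

lemma hex_K_eq: "hex_K = sqrt 3 / 2"
proof -
  let ?A = "{measure lebesgue (parallelogram 0 u v) |u v. hex_norm u \<le> 1 \<and> hex_norm v \<le> 1}"
  have "sqrt 3 / 2 \<in> ?A"
  proof -
    have "measure lebesgue (parallelogram 0 hex_u0 hex_u1) = sqrt 3 / 2"
      by (simp add: measure_parallelogram cross2_def hex_u0_def hex_u1_def)
    moreover have "hex_norm hex_u0 \<le> 1" "hex_norm hex_u1 \<le> 1"
      by (simp_all add: hex_norm_eq_gauge hex_gauge_vertex hex_vertices_def)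
    ultimately show ?thesis by (metis (mono_tags, lifting) mem_Collect_eq)
  qed
  moreover have "z \<le> sqrt 3 / 2" if "z \<in> ?A" for z
  proof -
    from \<open>z \<in> ?A\<close> obtain u v
      where "z = measure lebesgue (parallelogram 0 u v)" "hex_norm u \<le> 1" "hex_norm v \<le> 1"
      by blast
    then have z: "z = \<bar>cross2 u v\<bar>" and "hex_norm u \<le> 1" "hex_norm v \<le> 1"
      by (simp_all add: measure_parallelogram)
    then have "hex_norm u * hex_norm v \<le> 1"
      by (intro mult_le_one) (simp_all add: hex_norm_nonneg)
    then have "sqrt 3 / 2 * hex_norm u * hex_norm v \<le> sqrt 3 / 2"
      using mult_left_le[of "hex_norm u * hex_norm v" "sqrt 3 / 2"] by (simp add: mult.assoc)
    with abs_cross2_le[of u v] z show ?thesis by linarith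
  qed
  ultimately show ?thesis unfolding hex_K_def by (intro cSup_eq_maximum) auto
qed

theorem lemma2p5:
  fixes p a b :: "real^2"
  assumes "a \<noteq> 0" and "b \<notin> span {a}"
  shows "p_area (parallelogram p a b)
           = hex_norm a * hex_setdist (line_through p a) (line_through (p + b) a)"
  unfolding p_area_def measure_parallelogram hex_K_eq hex_setdist_parallel_lines[OF assms(1)]
  using hex_norm_pos[OF assms(1)] by (simp add: field_simps)

end
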